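(* Let $r\geq 1$ be an integer and let $D$ be either $D=1$ or a prime number $D\geq 2$. Then there exists a sequence of integers $\underline{\alpha}:\ \alpha_1<\alpha_2<\cdots<\alpha_{rD}$ with $\alpha_1\geq 2$ such that $\Delta_{r,D}(\underline{\alpha})\neq 0$.
   Context: $B_n(x)$ denotes the $n$-th Bernoulli polynomial, defined by $\frac{ze^{xz}}{e^z-1}=\sum_{n\ge 0}B_n(x)\frac{z^n}{n!}$. For integers $r,D\geq 1$ and integers $\alpha_1<\cdots<\alpha_{rD}$ with $\alpha_1\ge 2$, $\Delta_{r,D}(\underline{\alpha})$ is the determinant of the $rD\times rD$ matrix whose entry in row $j$ ($1\le j\le rD$) and column $mD+v$ ($0\le m\le r-1$, $1\le v\le D$) is $\dfrac{D^{\alpha_j}B_{\alpha_j+m}(v/D)}{\alpha_j+m}$. *)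

theory Defs
  imports Complex_Main "Jordan_Normal_Form.Determinant"
begin

text \<open>Bernoulli numbers (convention B_1 = -1/2), via the standard recursion
  sum_{k=0}^{n} C(n+1,k) B_k = 0 for n >= 1, B_0 = 1.\<close>
fun bernoulli_num :: "nat \<Rightarrow> real" where
  "bernoulli_num n = (if n = 0 then 1 else
     - (\<Sum>k<n. real (Suc n choose k) * (if k < n then bernoulli_num k else 0)) / real (Suc n))"

text \<open>Bernoulli polynomials B_n(x) = sum_k C(n,k) B_k x^(n-k), which agree with the
  generating function z e^(xz)/(e^z-1).\<close>
definition bernpoly :: "nat \<Rightarrow> real \<Rightarrow> real" where
  "bernpoly n x = (\<Sum>k\<le>n. real (n choose k) * bernoulli_num k * x ^ (n - k))"

text \<open>The rD x rD matrix: 0-based row i corresponds to alpha_{i+1}; 0-based column c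
  corresponds to (m, v) with c = m*D + (v-1), i.e. m = c div D, v = c mod D + 1.\<close>
definition Delta_mat :: "nat \<Rightarrow> nat \<Rightarrow> (nat \<Rightarrow> nat) \<Rightarrow> real mat" where
  "Delta_mat r D \<alpha> = mat (r*D) (r*D) (\<lambda>(i, c).
     let m = c div D; v = c mod D + 1 in
     real D ^ \<alpha> i * bernpoly (\<alpha> i + m) (real v / real D) / real (\<alpha> i + m))"

definition Delta :: "nat \<Rightarrow> nat \<Rightarrow> (nat \<Rightarrow> nat) \<Rightarrow> real" where
  "Delta r D \<alpha> = det (Delta_mat r D \<alpha>)"

end

(*
  The columns of Delta, viewed as functions of the row parameter a = alpha_i, are linearly
  independent on every tail {A..} of the naturals; the rows can then be chosen greedily,
  each new alpha_i being taken so large that the Laplace expansion along the last row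
  does not vanish.

  For the independence, write F(m,v,a) = D^a B_(a+m)(v/D) / (a+m). Since D^n B_n(v/D) / n!
  is the n-th coefficient of D X e^(vX) / (e^(DX) - 1), a relation
  sum_(m,v) c(m,v) F(m,v,a) = 0 for all large a says that sum_m D^(M-m) T_m^(m) is a
  polynomial, where T_m = (D sum_v c(m,v) e^(vX) / (e^(DX) - 1) - sum_v c(m,v)) / X.
  Multiplying by g^(M+1) with g = X (e^(DX) - 1) clears all denominators and yields an
  identity between polynomials in X and Y = e^X, which are algebraically independent. In it
  every term except the top one is divisible by g, and modulo e^(DX) - 1 the top one is a
  nonzero multiple of X^(M+1) sum_v c(M,v) Y^v. Setting X = 1, the polynomial
  sum_v c(M,v) Y^v of degree at most D without constant term is divisible by Y^D - 1, hence
  zero. Induction on the top index M gives the independence.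
*)

theory Submission
  imports Defs "HOL-Computational_Algebra.Polynomial_FPS"
begin

section \<open>Exponential polynomials\<close>

lemma (in comm_ring_hom) comm_ring_hom_map_poly: "comm_ring_hom (map_poly hom)"
proof
  show add: "map_poly hom (p + q) = map_poly hom p + map_poly hom q" for p q
    by (rule poly_eqI) (simp add: coeff_map_poly hom_add)
  show "map_poly hom (p * q) = map_poly hom p * map_poly hom q" for p q
  proof (induction p)
    case (pCons a p)
    have "map_poly hom (smult a q) = smult (hom a) (map_poly hom q)"
      by (rule poly_eqI) (simp add: coeff_map_poly hom_mult)
    with pCons.IH show ?case
      by (simp add: add map_poly_pCons)
  qed simp
qed simp_all

interpretation fps_of_poly_hom: comm_ring_hom fps_of_poly
  by unfold_locales (simp_all add: fps_of_poly_add fps_of_poly_mult)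

interpretation poly_hom: comm_ring_hom "\<lambda>p. poly p x"
  by unfold_locales simp_all

(* A polynomial P in Y with coefficients in R[X] stands for the exponential polynomial
   sum_j (coeff P j)(X) e^(jX). *)
definition exp_poly_fps :: "real poly poly \<Rightarrow> real fps" where
  "exp_poly_fps P = poly (map_poly fps_of_poly P) (fps_exp 1)"

interpretation exp_poly_fps: comm_ring_hom exp_poly_fps
proof -
  interpret map_fps: comm_ring_hom "map_poly fps_of_poly"
    by (rule fps_of_poly_hom.comm_ring_hom_map_poly)
  show "comm_ring_hom exp_poly_fps"
    by unfold_locales (simp_all add: exp_poly_fps_def map_fps.hom_add map_fps.hom_mult)
qed

lemma exp_poly_fps_monom: "exp_poly_fps (monom a n) = fps_of_poly a * fps_exp (real n)"
  by (simp add: exp_poly_fps_def map_poly_monom poly_monom fps_exp_power_mult)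

lemma exp_poly_fps_const: "exp_poly_fps [:a:] = fps_of_poly a"
  by (simp add: exp_poly_fps_def map_poly_pCons)

lemma exp_poly_fps_smult: "exp_poly_fps (smult a P) = fps_of_poly a * exp_poly_fps P"
  using exp_poly_fps.hom_mult[of "[:a:]" P] by (simp add: exp_poly_fps_const)

lemma exp_poly_fps_as_sum:
  assumes "degree P \<le> n"
  shows "exp_poly_fps P = (\<Sum>j\<le>n. fps_of_poly (coeff P j) * fps_exp (real j))"
  by (subst (1) poly_as_sum_of_monoms'[OF assms, symmetric])
     (simp add: exp_poly_fps.hom_sum exp_poly_fps_monom)

definition exp_poly_deriv :: "real poly poly \<Rightarrow> real poly poly" where
  "exp_poly_deriv P = map_poly pderiv P + pCons 0 (pderiv P)"

lemma coeff_exp_poly_deriv: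
  "coeff (exp_poly_deriv P) j = pderiv (coeff P j) + of_nat j * coeff P j"
  by (cases j) (simp_all add: exp_poly_deriv_def coeff_map_poly coeff_pderiv)

lemma degree_exp_poly_deriv: "degree (exp_poly_deriv P) \<le> degree P"
  by (rule degree_le) (simp add: coeff_exp_poly_deriv coeff_eq_0)

lemma fps_deriv_exp_poly_fps: "fps_deriv (exp_poly_fps P) = exp_poly_fps (exp_poly_deriv P)"
proof -
  have "fps_deriv (exp_poly_fps P) =
      (\<Sum>j\<le>degree P. fps_of_poly (coeff (exp_poly_deriv P) j) * fps_exp (real j))"
    by (simp add: exp_poly_fps_as_sum[OF order.refl] fps_deriv_sum coeff_exp_poly_deriv fps_of_poly_pderiv
        fps_of_poly_hom.hom_add fps_of_poly_hom.hom_mult fps_of_poly_hom.hom_of_nat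
        fps_of_nat algebra_simps)
  also have "\<dots> = exp_poly_fps (exp_poly_deriv P)"
    by (rule exp_poly_fps_as_sum[OF degree_exp_poly_deriv, symmetric])
  finally show ?thesis .
qed

lemma higher_pderiv_eq_0: "degree p < k \<Longrightarrow> (pderiv ^^ k) p = 0"
  by (rule poly_eqI) (simp add: coeff_higher_pderiv coeff_eq_0)

lemma pderiv_plus_smult_funpow_eq_0D:
  fixes p :: "real poly"
  assumes "c \<noteq> 0" and "((\<lambda>q. pderiv q + smult c q) ^^ k) p = 0"
  shows "p = 0"
  using assms(2)
proof (induction k arbitrary: p)
  case (Suc k)
  have step: "q = 0" if "pderiv q + smult c q = 0" for q :: "real poly"
  proof -
    have "coeff (pderiv q + smult c q) (degree q) = c * lead_coeff q"
      by (simp add: coeff_pderiv coeff_eq_0)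
    with that assms(1) show ?thesis by simp
  qed
  have "((\<lambda>q. pderiv q + smult c q) ^^ k) p = 0"
    by (rule step) (use Suc.prems in simp)
  then show ?case by (rule Suc.IH)
qed simp

lemma exp_poly_fps_monom_eq_0_iff: "exp_poly_fps (monom a n) = 0 \<longleftrightarrow> a = 0"
  by (simp add: exp_poly_fps_monom)

lemma coeff_funpow_exp_poly_deriv_minus:
  "coeff (((\<lambda>Q. exp_poly_deriv Q - of_nat n * Q) ^^ i) P) j =
    ((\<lambda>p. pderiv p + smult (real j - real n) p) ^^ i) (coeff P j)"
  by (induction i) (simp_all add: coeff_exp_poly_deriv of_nat_poly smult_diff_left)

lemma exp_poly_fps_funpow_deriv_minus_eq_0:
  assumes "exp_poly_fps P = 0"
  shows "exp_poly_fps (((\<lambda>Q. exp_poly_deriv Q - of_nat n * Q) ^^ i) P) = 0"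
  by (induction i)
     (simp_all add: assms exp_poly_fps.hom_minus exp_poly_fps.hom_mult
       fps_deriv_exp_poly_fps[symmetric])

lemma poly_eq_monomI:
  assumes "degree p \<le> n" and "\<And>j. j < n \<Longrightarrow> coeff p j = 0"
  shows "p = monom (coeff p n) n"
proof (rule poly_eqI)
  fix j
  show "coeff p j = coeff (monom (coeff p n) n) j"
    using assms by (cases j n rule: linorder_cases) (auto simp: coeff_monom coeff_eq_0)
qed

lemma exp_poly_fps_eq_0D:
  assumes "degree P \<le> n" and "exp_poly_fps P = 0"
  shows "P = 0"
  using assms
proof (induction n arbitrary: P)
  case 0
  define a where "a = coeff P 0"
  from 0 have "P = monom a 0"
    unfolding a_def by (intro poly_eq_monomI) simp_all
  with 0 show ?case
    by (simp add: exp_poly_fps_monom_eq_0_iff)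
next
  case (Suc n)
  (* A high power of d/dX - (n + 1) kills the top term a(X) e^((n+1)X) and acts on each
     lower coefficient as a power of the injective map p |-> p' + (j - n - 1) p. *)
  define L where "L = (\<lambda>Q. exp_poly_deriv Q - of_nat (Suc n) * Q)"
  define k where "k = Suc (degree (coeff P (Suc n)))"
  have zero: "((\<lambda>p. pderiv p + smult c p) ^^ i) 0 = 0" for c i
    by (induction i) simp_all
  have "degree ((L ^^ k) P) \<le> n"
  proof (rule degree_le, intro allI impI)
    fix j assume "n < j"
    with Suc.prems(1) show "coeff ((L ^^ k) P) j = 0"
      unfolding L_def coeff_funpow_exp_poly_deriv_minus
      by (cases "j = Suc n") (simp_all add: k_def higher_pderiv_eq_0 coeff_eq_0 zero del: funpow.simps)
  qed
  then have "(L ^^ k) P = 0"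
    using Suc.IH Suc.prems(2) exp_poly_fps_funpow_deriv_minus_eq_0 unfolding L_def by blast
  have low: "coeff P j = 0" if "j < Suc n" for j
  proof (rule pderiv_plus_smult_funpow_eq_0D[where c = "real j - real (Suc n)" and k = k])
    show "real j - real (Suc n) \<noteq> 0"
      using that by simp
    have "coeff ((L ^^ k) P) j = 0"
      using \<open>(L ^^ k) P = 0\<close> by simp
    then show "((\<lambda>p. pderiv p + smult (real j - real (Suc n)) p) ^^ k) (coeff P j) = 0"
      unfolding L_def coeff_funpow_exp_poly_deriv_minus .
  qed
  define a where "a = coeff P (Suc n)"
  have "P = monom a (Suc n)"
    unfolding a_def using Suc.prems(1) low by (rule poly_eq_monomI)
  with Suc.prems(2) show ?case
    by (simp add: exp_poly_fps_monom_eq_0_iff)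
qed

lemma exp_poly_fps_eq_iff: "exp_poly_fps P = exp_poly_fps Q \<longleftrightarrow> P = Q"
  using exp_poly_fps_eq_0D[OF order.refl, of "P - Q"] by (auto simp: exp_poly_fps.hom_minus)

section \<open>Derivative towers\<close>

(* For P = g F one has deriv_tower d g P k = g^(k+1) F^(k) (deriv_tower_fps): the k-th
   derivative of P / g with the denominator cleared, computed without dividing by g. *)
primrec deriv_tower :: "('a::comm_ring_1 \<Rightarrow> 'a) \<Rightarrow> 'a \<Rightarrow> 'a \<Rightarrow> nat \<Rightarrow> 'a" where
  "deriv_tower d g P 0 = P"
| "deriv_tower d g P (Suc k) =
     g * d (deriv_tower d g P k) - of_nat (Suc k) * d g * deriv_tower d g P k"

lemma deriv_tower_fps:
  fixes g F :: "'a::comm_ring_1 fps"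
  shows "deriv_tower fps_deriv g (g * F) k = g ^ Suc k * (fps_deriv ^^ k) F"
proof (induction k)
  case (Suc k)
  define G where "G = (fps_deriv ^^ k) F"
  have deriv_power: "fps_deriv (g ^ Suc k) = of_nat (Suc k) * fps_deriv g * g ^ k"
    by (simp only: fps_deriv_power fps_of_nat diff_Suc_1)
  have "deriv_tower fps_deriv g (g * F) (Suc k) =
      g * fps_deriv (g ^ Suc k * G) - of_nat (Suc k) * fps_deriv g * (g ^ Suc k * G)"
    by (simp only: deriv_tower.simps Suc.IH G_def)
  also have "\<dots> = g ^ Suc (Suc k) * fps_deriv G"
    by (simp only: fps_deriv_mult deriv_power) (simp add: algebra_simps)
  finally show ?case
    by (simp add: G_def)
qed simp

lemma (in comm_ring_hom) hom_deriv_tower: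
  assumes "\<And>x. hom (d x) = d' (hom x)"
  shows "hom (deriv_tower d g P k) = deriv_tower d' (hom g) (hom P) k"
  by (induction k) (simp_all add: assms hom_distribs)

lemma deriv_tower_dvd:
  fixes x :: "'a::comm_ring_1"
  assumes "x dvd g" and "x dvd d g - b"
  shows "x dvd deriv_tower d g P k - (- 1) ^ k * of_nat (fact k) * b ^ k * P"
proof (induction k)
  case (Suc k)
  define T where "T = deriv_tower d g P k"
  define R where "R = (- 1) ^ k * of_nat (fact k) * b ^ k * P"
  have "deriv_tower d g P (Suc k) - (- 1) ^ Suc k * of_nat (fact (Suc k)) * b ^ Suc k * P =
      g * d T - of_nat (Suc k) * (d g - b) * T - of_nat (Suc k) * b * (T - R)"
    by (simp add: T_def R_def algebra_simps)
  also have "x dvd \<dots>"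
    using assms Suc.IH unfolding T_def R_def by (meson dvd_diff dvd_mult dvd_mult2)
  finally show ?case .
qed simp

lemma exp_poly_fps_deriv_tower:
  "exp_poly_fps (deriv_tower exp_poly_deriv g P k) =
    deriv_tower fps_deriv (exp_poly_fps g) (exp_poly_fps P) k"
  by (rule exp_poly_fps.hom_deriv_tower) (simp add: fps_deriv_exp_poly_fps)

lemma dvd_deriv_tower_if_sum_eq_poly:
  assumes numerator: "\<And>m. exp_poly_fps (N m) = exp_poly_fps g * F m"
    and poly: "(\<Sum>m<Suc M. of_nat (\<kappa> ^ (M - m)) * (fps_deriv ^^ m) (F m)) = fps_of_poly l"
  shows "g dvd deriv_tower exp_poly_deriv g (N M) M"
proof -
  define \<Psi> where "\<Psi> m = deriv_tower exp_poly_deriv g (N m) m" for m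
  define G where "G = exp_poly_fps g"
  have ev_\<Psi>: "exp_poly_fps (\<Psi> m) = G ^ Suc m * (fps_deriv ^^ m) (F m)" for m
    unfolding \<Psi>_def G_def exp_poly_fps_deriv_tower numerator by (rule deriv_tower_fps)
  have "exp_poly_fps (g ^ Suc M * [:l:]) =
      G ^ Suc M * (\<Sum>m<Suc M. of_nat (\<kappa> ^ (M - m)) * (fps_deriv ^^ m) (F m))"
    by (simp only: G_def exp_poly_fps.hom_mult exp_poly_fps.hom_power exp_poly_fps_const poly)
  also have "\<dots> = (\<Sum>m<Suc M. of_nat (\<kappa> ^ (M - m)) * G ^ (M - m) *
      (G ^ Suc m * (fps_deriv ^^ m) (F m)))"
    unfolding sum_distrib_left
  proof (rule sum.cong[OF refl])
    fix m assume "m \<in> {..<Suc M}"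
    then have "G ^ Suc M = G ^ (M - m) * G ^ Suc m"
      by (simp flip: power_add)
    then show "G ^ Suc M * (of_nat (\<kappa> ^ (M - m)) * (fps_deriv ^^ m) (F m)) =
        of_nat (\<kappa> ^ (M - m)) * G ^ (M - m) * (G ^ Suc m * (fps_deriv ^^ m) (F m))"
      by (simp only: mult_ac)
  qed
  also have "\<dots> = exp_poly_fps (\<Sum>m<Suc M. of_nat (\<kappa> ^ (M - m)) * g ^ (M - m) * \<Psi> m)"
    by (simp only: G_def exp_poly_fps.hom_sum exp_poly_fps.hom_mult exp_poly_fps.hom_power
        exp_poly_fps.hom_of_nat ev_\<Psi>)
  finally have "\<Psi> M = g ^ Suc M * [:l:] - (\<Sum>m<M. of_nat (\<kappa> ^ (M - m)) * g ^ (M - m) * \<Psi> m)"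
    by (simp add: exp_poly_fps_eq_iff)
  moreover have "g dvd g ^ Suc M * [:l:]"
    by (intro dvd_mult2) simp
  moreover have "g dvd (\<Sum>m<M. of_nat (\<kappa> ^ (M - m)) * g ^ (M - m) * \<Psi> m)"
    by (intro dvd_sum) (simp add: dvd_power)
  ultimately show ?thesis
    unfolding \<Psi>_def by (simp only: dvd_diff)
qed

lemma fps_nth_higher_deriv:
  "fps_nth ((fps_deriv ^^ k) f) j = pochhammer (of_nat (Suc j)) k * fps_nth f (j + k)"
  by (induction k arbitrary: j)
     (simp_all add: pochhammer_rec algebra_simps)

section \<open>Choosing rows for a nonsingular minor\<close>

definition lin_indep_on_tails :: "nat \<Rightarrow> (nat \<Rightarrow> nat \<Rightarrow> 'a::comm_ring_1) \<Rightarrow> bool" where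
  "lin_indep_on_tails N f \<longleftrightarrow>
     (\<forall>A coef. (\<forall>a\<ge>A. (\<Sum>c<N. coef c * f c a) = 0) \<longrightarrow> (\<forall>c<N. coef c = 0))"

lemma lin_indep_on_tails_le:
  assumes "lin_indep_on_tails N f" and "k \<le> N"
  shows "lin_indep_on_tails k f"
  unfolding lin_indep_on_tails_def
proof (intro allI impI)
  fix A coef c
  assume rel: "\<forall>a\<ge>A. (\<Sum>c<k. coef c * f c a) = 0" and "c < k"
  define coef' where "coef' c = (if c < k then coef c else 0)" for c
  have "(\<Sum>c<N. coef' c * f c a) = (\<Sum>c<k. coef c * f c a)" for a
    using assms(2) by (intro sum.mono_neutral_cong_right) (auto simp: coef'_def)
  with rel assms(1) have "\<forall>c<N. coef' c = 0"
    unfolding lin_indep_on_tails_def by metis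
  then have "coef' c = 0"
    using \<open>c < k\<close> assms(2) by simp
  with \<open>c < k\<close> show "coef c = 0"
    by (simp add: coef'_def)
qed

lemma det_mat_upd_last_row:
  fixes f :: "nat \<Rightarrow> nat \<Rightarrow> 'a::comm_ring_1" and k :: nat and \<alpha> :: "nat \<Rightarrow> nat"
  defines "M a \<equiv> mat (Suc k) (Suc k) (\<lambda>(i, c). f c ((\<alpha>(k := a)) i))"
  shows "det (M a) = (\<Sum>c<Suc k. cofactor (M b) k c * f c a)"
    and "cofactor (M b) k k = det (mat k k (\<lambda>(i, c). f c (\<alpha> i)))"
proof -
  have "mat_delete (M a) k c = mat_delete (M b) k c" for c
    unfolding M_def mat_delete_def by (rule eq_matI) auto
  then have "cofactor (M a) k c = cofactor (M b) k c" for c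
    by (simp add: cofactor_def)
  moreover have "M a \<in> carrier_mat (Suc k) (Suc k)"
    by (simp add: M_def)
  ultimately show "det (M a) = (\<Sum>c<Suc k. cofactor (M b) k c * f c a)"
    by (subst laplace_expansion_row[where i = k]) (auto simp: M_def mult.commute intro!: sum.cong)
  have "mat_delete (M b) k k = mat k k (\<lambda>(i, c). f c (\<alpha> i))"
    unfolding M_def mat_delete_def by (rule eq_matI) auto
  then show "cofactor (M b) k k = det (mat k k (\<lambda>(i, c). f c (\<alpha> i)))"
    by (simp add: cofactor_def)
qed

lemma lin_indep_on_tails_extend_det_ne_0:
  fixes f :: "nat \<Rightarrow> nat \<Rightarrow> 'a::comm_ring_1"
  assumes "lin_indep_on_tails (Suc k) f" and "det (mat k k (\<lambda>(i, c). f c (\<alpha> i))) \<noteq> 0"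
  shows "\<exists>a\<ge>A. det (mat (Suc k) (Suc k) (\<lambda>(i, c). f c ((\<alpha>(k := a)) i))) \<noteq> 0"
proof (rule ccontr)
  define M where "M a = mat (Suc k) (Suc k) (\<lambda>(i, c). f c ((\<alpha>(k := a)) i))" for a
  assume "\<not> (\<exists>a\<ge>A. det (mat (Suc k) (Suc k) (\<lambda>(i, c). f c ((\<alpha>(k := a)) i))) \<noteq> 0)"
  then have "\<forall>a\<ge>A. (\<Sum>c<Suc k. cofactor (M A) k c * f c a) = 0"
    using det_mat_upd_last_row(1)[where f = f and k = k and \<alpha> = \<alpha>] unfolding M_def by auto
  with assms(1) have "cofactor (M A) k k = 0"
    unfolding lin_indep_on_tails_def by blast
  with assms(2) show False
    using det_mat_upd_last_row(2)[where f = f and k = k and \<alpha> = \<alpha>] unfolding M_def by simp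
qed

lemma lin_indep_on_tails_imp_det_ne_0:
  fixes f :: "nat \<Rightarrow> nat \<Rightarrow> 'a::comm_ring_1"
  assumes "lin_indep_on_tails k f"
  shows "\<exists>\<alpha>. (\<forall>i j. i < j \<longrightarrow> j < k \<longrightarrow> \<alpha> i < \<alpha> j) \<and> (\<forall>i<k. b \<le> \<alpha> i) \<and>
    det (mat k k (\<lambda>(i, c). f c (\<alpha> i))) \<noteq> 0"
  using assms
proof (induction k)
  case 0
  show ?case
    by (intro exI[of _ "\<lambda>_. b"]) (simp add: det_dim_zero)
next
  case (Suc k)
  then obtain \<alpha> where inc: "\<forall>i j. i < j \<longrightarrow> j < k \<longrightarrow> \<alpha> i < \<alpha> j" and ge: "\<forall>i<k. b \<le> \<alpha> i"
    and det_k: "det (mat k k (\<lambda>(i, c). f c (\<alpha> i))) \<noteq> 0"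
    using lin_indep_on_tails_le[of "Suc k" f k] by auto
  define A where "A = Suc (b + (\<Sum>i<k. \<alpha> i))"
  obtain a where "a \<ge> A" and det_a: "det (mat (Suc k) (Suc k) (\<lambda>(i, c). f c ((\<alpha>(k := a)) i))) \<noteq> 0"
    using lin_indep_on_tails_extend_det_ne_0[OF Suc.prems det_k] by blast
  have below_a: "\<alpha> i < a" if "i < k" for i
    using that member_le_sum[of i "{..<k}" \<alpha>] \<open>a \<ge> A\<close> unfolding A_def by simp
  show ?case
  proof (intro exI conjI allI impI)
    fix i j assume "i < j" "j < Suc k"
    then show "(\<alpha>(k := a)) i < (\<alpha>(k := a)) j"
      using inc below_a[of i] by (cases "j = k") auto
  next
    fix i assume "i < Suc k"
    then show "b \<le> (\<alpha>(k := a)) i"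
      using ge \<open>a \<ge> A\<close> unfolding A_def by (cases "i = k") auto
  qed (fact det_a)
qed

section \<open>The generating function of the Bernoulli polynomials\<close>

declare bernoulli_num.simps [simp del]

lemma bernoulli_num_0 [simp]: "bernoulli_num 0 = 1"
  by (simp add: bernoulli_num.simps)

lemma bernoulli_num_binomial_sum:
  assumes "n \<ge> 2"
  shows "(\<Sum>k<n. real (n choose k) * bernoulli_num k) = 0"
proof -
  obtain m where n: "n = Suc m" and "m \<noteq> 0"
    using assms by (cases n) auto
  then have "bernoulli_num m * real n = - (\<Sum>k<m. real (n choose k) * bernoulli_num k)"
    by (subst bernoulli_num.simps) (simp add: field_simps)
  then show ?thesis
    by (simp add: n mult.commute)
qed

definition bernoulli_fps :: "real \<Rightarrow> real fps" where
  "bernoulli_fps t = Abs_fps (\<lambda>k. bernoulli_num k * t ^ k / fact k)"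

lemma bernoulli_fps_mult_exp_minus_1:
  "bernoulli_fps t * (fps_exp t - 1) = fps_const t * fps_X"
proof (rule fps_ext)
  fix n
  have "fps_nth (bernoulli_fps t * (fps_exp t - 1)) n =
      (\<Sum>i<Suc n. fps_nth (bernoulli_fps t) i * fps_nth (fps_exp t - 1) (n - i))"
    by (simp add: fps_mult_nth atLeast0AtMost lessThan_Suc_atMost)
  also have "\<dots> = (\<Sum>i<n. fps_nth (bernoulli_fps t) i * fps_nth (fps_exp t - 1) (n - i))"
    by simp
  also have "\<dots> = t ^ n / fact n * (\<Sum>i<n. real (n choose i) * bernoulli_num i)"
    unfolding sum_distrib_left
  proof (rule sum.cong[OF refl])
    fix i assume "i \<in> {..<n}"
    then have i: "i \<le> n" "n - i \<noteq> 0" by simp_all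
    then have "t ^ n = t ^ i * t ^ (n - i)" by (simp flip: power_add)
    with i show "fps_nth (bernoulli_fps t) i * fps_nth (fps_exp t - 1) (n - i) =
        t ^ n / fact n * (real (n choose i) * bernoulli_num i)"
      by (simp add: bernoulli_fps_def binomial_fact field_simps)
  qed
  also have "\<dots> = fps_nth (fps_const t * fps_X) n"
  proof -
    consider "n = 0" | "n = 1" | "n \<ge> 2" by linarith
    then show ?thesis
      by cases (simp_all add: bernoulli_num_binomial_sum)
  qed
  finally show "fps_nth (bernoulli_fps t * (fps_exp t - 1)) n = fps_nth (fps_const t * fps_X) n" .
qed

lemma fps_nth_bernoulli_fps_mult_exp:
  "fps_nth (bernoulli_fps t * fps_exp (t * x)) n = t ^ n * bernpoly n x / fact n"
proof -
  have "fps_nth (bernoulli_fps t * fps_exp (t * x)) n =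
      (\<Sum>i\<le>n. fps_nth (bernoulli_fps t) i * fps_nth (fps_exp (t * x)) (n - i))"
    by (simp add: fps_mult_nth atLeast0AtMost)
  also have "\<dots> = t ^ n / fact n * (\<Sum>i\<le>n. real (n choose i) * bernoulli_num i * x ^ (n - i))"
    unfolding sum_distrib_left
  proof (rule sum.cong[OF refl])
    fix i assume "i \<in> {..n}"
    then have i: "i \<le> n" by simp
    then have "t ^ n = t ^ i * t ^ (n - i)" by (simp flip: power_add)
    then show "fps_nth (bernoulli_fps t) i * fps_nth (fps_exp (t * x)) (n - i) =
        t ^ n / fact n * (real (n choose i) * bernoulli_num i * x ^ (n - i))"
      by (simp add: bernoulli_fps_def binomial_fact[OF i] power_mult_distrib field_simps)
  qed
  finally show ?thesis
    by (simp add: bernpoly_def)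
qed

section \<open>Independence of the columns of the Delta matrix\<close>

lemma monom_minus_1_dvd_imp_eq_0:
  fixes p :: "'a::idom poly"
  assumes "D \<ge> 1" and "degree p \<le> D" and "coeff p 0 = 0" and "monom 1 D - 1 dvd p"
  shows "p = 0"
proof (rule ccontr)
  assume "p \<noteq> 0"
  from assms(4) obtain q where q: "p = (monom 1 D - 1) * q"
    by (elim dvdE)
  have "degree (monom 1 D + (- 1) :: 'a poly) = D"
    using assms(1) by (subst degree_add_eq_left) (simp_all add: degree_monom_eq)
  with q \<open>p \<noteq> 0\<close> assms(2) have "degree q = 0"
    by (auto simp: degree_mult_eq)
  then have "q = [:coeff q 0:]"
    by (rule degree_0_id[symmetric])
  moreover have "coeff p 0 = - coeff q 0"
    using q assms(1) by (simp add: coeff_mult_0 coeff_monom)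
  ultimately show False
    using q assms(3) \<open>p \<noteq> 0\<close> by (metis mult_zero_right neg_equal_0_iff_equal pCons_0_0)
qed

lemma fps_eq_fps_of_poly_truncate:
  assumes "\<And>j. j \<ge> n \<Longrightarrow> fps_nth f j = 0"
  shows "f = fps_of_poly (truncate_fps n f)"
  unfolding fps_of_poly_truncate by (rule fps_ext) (simp add: assms)

lemma sum_lessThan_mult:
  fixes r D :: nat
  shows "(\<Sum>c<r * D. h c) = (\<Sum>m<r. \<Sum>u<D. h (m * D + u))"
proof -
  have "(\<Sum>c<r * D. h c) = (\<Sum>m<r. sum h {m * D..<m * D + D})"
    by (rule sum.nat_group[symmetric])
  also have "\<dots> = (\<Sum>m<r. \<Sum>u<D. h (m * D + u))"
    by (simp add: sum.atLeastLessThan_shift_0[of h] atLeast0LessThan comp_def)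
  finally show ?thesis .
qed

(* exp_sum_poly D w stands for sum_(v=1..D) w(v - 1) e^(vX). *)
definition exp_sum_poly :: "nat \<Rightarrow> (nat \<Rightarrow> real) \<Rightarrow> real poly poly" where
  "exp_sum_poly D w = (\<Sum>u<D. monom [:w u:] (Suc u))"

lemma exp_poly_fps_exp_sum_poly:
  "exp_poly_fps (exp_sum_poly D w) = (\<Sum>u<D. fps_const (w u) * fps_exp (real (Suc u)))"
  by (simp add: exp_sum_poly_def exp_poly_fps.hom_sum exp_poly_fps_monom fps_of_poly_const)

lemma exp_poly_fps_exp_minus_1: "exp_poly_fps (monom 1 D - 1) = fps_exp (real D) - 1"
  by (simp add: exp_poly_fps.hom_minus exp_poly_fps_monom)

lemma exp_poly_deriv_X_mult_exp_minus_1: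
  "exp_poly_deriv ([:[:0, 1:]:] * (monom 1 D - 1)) =
    (monom 1 D - 1) + of_nat D * [:[:0, 1:]:] * monom 1 D"
  unfolding exp_poly_fps_eq_iff[symmetric]
  by (simp add: fps_deriv_exp_poly_fps[symmetric] exp_poly_fps.hom_mult exp_poly_fps.hom_add
      exp_poly_fps.hom_minus exp_poly_fps.hom_of_nat exp_poly_fps_smult exp_poly_fps_exp_minus_1
      exp_poly_fps_monom fps_of_nat algebra_simps)

definition shifted_bernoulli_fps :: "nat \<Rightarrow> (nat \<Rightarrow> real) \<Rightarrow> real fps" where
  "shifted_bernoulli_fps D w =
     fps_shift 1 (bernoulli_fps (real D) * exp_poly_fps (exp_sum_poly D w))"

definition shifted_bernoulli_numerator :: "nat \<Rightarrow> (nat \<Rightarrow> real) \<Rightarrow> real poly poly" where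
  "shifted_bernoulli_numerator D w =
     of_nat D * [:[:0, 1:]:] * exp_sum_poly D w - [:[:sum w {..<D}:]:] * (monom 1 D - 1)"

lemma exp_poly_fps_shifted_bernoulli_numerator:
  "exp_poly_fps (shifted_bernoulli_numerator D w) =
    exp_poly_fps ([:[:0, 1:]:] * (monom 1 D - 1)) * shifted_bernoulli_fps D w"
proof -
  define U where "U = bernoulli_fps (real D) * exp_poly_fps (exp_sum_poly D w)"
  define E where "E = fps_exp (real D) - 1"
  have "fps_nth U 0 = sum w {..<D}"
    by (simp add: U_def bernoulli_fps_def exp_poly_fps_exp_sum_poly fps_sum_nth)
  then have X_shift: "fps_X * fps_shift 1 U = U - fps_const (sum w {..<D})"
    by (intro fps_ext) (simp split: nat.split)
  have "E * U = of_nat D * fps_X * exp_poly_fps (exp_sum_poly D w)"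
    using bernoulli_fps_mult_exp_minus_1[of "real D"]
    by (simp add: U_def E_def mult.assoc[symmetric] mult.commute[of "fps_exp (real D) - 1"] fps_of_nat)
  then have "exp_poly_fps (shifted_bernoulli_numerator D w) = E * U - fps_const (sum w {..<D}) * E"
    by (simp add: shifted_bernoulli_numerator_def E_def exp_poly_fps.hom_minus exp_poly_fps.hom_mult
        exp_poly_fps.hom_of_nat exp_poly_fps_smult exp_poly_fps_monom fps_of_poly_const)
  also have "\<dots> = E * (fps_X * fps_shift 1 U)"
    unfolding X_shift by (simp add: algebra_simps)
  also have "\<dots> = exp_poly_fps ([:[:0, 1:]:] * (monom 1 D - 1)) * shifted_bernoulli_fps D w"
    by (simp add: shifted_bernoulli_fps_def U_def[symmetric] E_def exp_poly_fps_smult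
        exp_poly_fps_exp_minus_1 mult_ac)
  finally show ?thesis .
qed

definition Delta_entry :: "nat \<Rightarrow> nat \<Rightarrow> nat \<Rightarrow> nat \<Rightarrow> real" where
  "Delta_entry D m v a = real D ^ a * bernpoly (a + m) (real v / real D) / real (a + m)"

lemma fact_mult_fps_nth_higher_deriv_shifted_bernoulli:
  assumes "D \<ge> 1"
  shows "fact j * fps_nth ((fps_deriv ^^ m) (shifted_bernoulli_fps D w)) j =
    real D ^ m * (\<Sum>u<D. w u * Delta_entry D m (Suc u) (Suc j))"
proof -
  define n where "n = Suc (j + m)"
  have entry: "real D ^ m * Delta_entry D m v (Suc j) =
      fact (j + m) * fps_nth (bernoulli_fps (real D) * fps_exp (real v)) n" for v
  proof -
    have "real D * (real v / real D) = real v" using assms by simp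
    then have "fps_nth (bernoulli_fps (real D) * fps_exp (real v)) n =
        real D ^ n * bernpoly n (real v / real D) / fact n"
      using fps_nth_bernoulli_fps_mult_exp[of "real D" "real v / real D" n] by simp
    then show ?thesis
      by (simp add: Delta_entry_def n_def power_add field_simps del: of_nat_Suc)
  qed
  have "fact j * pochhammer (real (Suc j)) m = fact (j + m)"
    by (simp add: pochhammer_fact pochhammer_product' add.commute)
  then have "fact j * fps_nth ((fps_deriv ^^ m) (shifted_bernoulli_fps D w)) j =
      fact (j + m) * fps_nth (bernoulli_fps (real D) * exp_poly_fps (exp_sum_poly D w)) n"
    by (simp add: fps_nth_higher_deriv shifted_bernoulli_fps_def n_def mult.assoc[symmetric])
  also have "\<dots> = (\<Sum>u<D. w u * (fact (j + m) *
      fps_nth (bernoulli_fps (real D) * fps_exp (real (Suc u))) n))"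
    unfolding exp_poly_fps_exp_sum_poly sum_distrib_left fps_sum_nth
    by (intro sum.cong refl) (subst mult.left_commute, simp)
  also have "\<dots> = real D ^ m * (\<Sum>u<D. w u * Delta_entry D m (Suc u) (Suc j))"
    unfolding sum_distrib_left
    by (intro sum.cong refl) (simp only: mult.left_commute[of "real D ^ m"] entry)
  finally show ?thesis .
qed

lemma Delta_entry_relation_imp_poly:
  assumes D: "D \<ge> 1"
    and rel: "\<And>a. a \<ge> A \<Longrightarrow> (\<Sum>m<Suc M. \<Sum>u<D. c m u * Delta_entry D m (Suc u) a) = 0"
  shows "\<exists>l. (\<Sum>m<Suc M. of_nat (D ^ (M - m)) * (fps_deriv ^^ m) (shifted_bernoulli_fps D (c m))) =
    fps_of_poly l"
proof -
  define S where
    "S = (\<Sum>m<Suc M. of_nat (D ^ (M - m)) * (fps_deriv ^^ m) (shifted_bernoulli_fps D (c m)))"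
  have nth_S: "fact j * fps_nth S j =
      real D ^ M * (\<Sum>m<Suc M. \<Sum>u<D. c m u * Delta_entry D m (Suc u) (Suc j))" for j
  proof -
    have "fact j * fps_nth S j = (\<Sum>m<Suc M. real D ^ (M - m) *
        (fact j * fps_nth ((fps_deriv ^^ m) (shifted_bernoulli_fps D (c m))) j))"
      unfolding S_def fps_sum_nth sum_distrib_left
      by (intro sum.cong refl) (simp add: fps_of_nat[symmetric] mult_ac)
    also have "\<dots> = (\<Sum>m<Suc M. real D ^ M * (\<Sum>u<D. c m u * Delta_entry D m (Suc u) (Suc j)))"
    proof (intro sum.cong refl)
      fix m assume "m \<in> {..<Suc M}"
      then have "real D ^ (M - m) * real D ^ m = real D ^ M"
        by (simp flip: power_add)
      then show "real D ^ (M - m) * (fact j * fps_nth ((fps_deriv ^^ m) (shifted_bernoulli_fps D (c m))) j) =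
          real D ^ M * (\<Sum>u<D. c m u * Delta_entry D m (Suc u) (Suc j))"
        by (simp add: fact_mult_fps_nth_higher_deriv_shifted_bernoulli[OF D] mult.assoc[symmetric])
    qed
    finally show ?thesis
      by (simp only: sum_distrib_left)
  qed
  have "fps_nth S j = 0" if "j \<ge> A" for j
  proof -
    have "fact j * fps_nth S j = 0"
      using nth_S[of j] rel[of "Suc j"] that by simp
    then show ?thesis by simp
  qed
  then show ?thesis
    unfolding S_def[symmetric] by (blast intro: fps_eq_fps_of_poly_truncate)
qed

lemma exp_sum_poly_coeff_eq_0_if_dvd:
  assumes "D \<ge> 1" and "K \<noteq> 0"
    and "monom 1 D - 1 dvd of_nat K * [:[:0, 1:]:] ^ n * exp_sum_poly D w"
    and "u < D"
  shows "w u = 0"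
proof -
  \<comment> \<open>setting \<open>X = 1\<close> maps \<open>e\<^sup>D\<^sup>X - 1\<close> to \<open>Y\<^sup>D - 1\<close>\<close>
  interpret eval_1: comm_ring_hom "map_poly (\<lambda>a::real poly. poly a 1)"
    by (rule poly_hom.comm_ring_hom_map_poly)
  define p where "p = (\<Sum>u<D. monom (w u) (Suc u))"
  have "map_poly (\<lambda>a. poly a 1) (monom 1 D - 1) dvd
      map_poly (\<lambda>a. poly a 1) (of_nat K * [:[:0, 1:]:] ^ n * exp_sum_poly D w)"
    using assms(3) by (rule eval_1.hom_dvd)
  then have "monom 1 D - 1 dvd smult (real K) p"
    by (simp only: eval_1.hom_minus eval_1.hom_mult eval_1.hom_power eval_1.hom_of_nat
        eval_1.hom_sum eval_1.hom_one exp_sum_poly_def)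
       (simp add: map_poly_monom map_poly_pCons p_def of_nat_poly one_pCons[symmetric])
  with assms(2) have "monom 1 D - 1 dvd p"
    by (simp add: dvd_smult_cancel)
  moreover have "degree p \<le> D"
    unfolding p_def by (intro degree_sum_le) (auto intro: order.trans[OF degree_monom_le])
  moreover have "coeff p 0 = 0"
    by (simp add: p_def coeff_sum)
  ultimately have "p = 0"
    using monom_minus_1_dvd_imp_eq_0[OF assms(1)] by blast
  then have "coeff p (Suc u) = 0"
    by simp
  with assms(4) show ?thesis
    by (simp add: p_def coeff_sum)
qed

lemma exp_minus_1_dvd_deriv_tower_numerator:
  fixes D m :: nat and w :: "nat \<Rightarrow> real"
  defines "X \<equiv> [:[:0, 1:]:] :: real poly poly" and "H \<equiv> monom 1 D - 1 :: real poly poly"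
  shows "H dvd (- 1) ^ m * deriv_tower exp_poly_deriv (X * H) (shifted_bernoulli_numerator D w) m -
    of_nat (fact m * D ^ Suc m) * X ^ Suc m * exp_sum_poly D w"
proof -
  define N where "N = shifted_bernoulli_numerator D w"
  define T where "T = of_nat (fact m * D ^ Suc m) * X ^ Suc m * exp_sum_poly D w"
  define Q where "Q = of_nat (fact m) * (of_nat D * X) ^ m * [:[:sum w {..<D}:]:]"
  have "exp_poly_deriv (X * H) - of_nat D * X = H * (1 + of_nat D * X)"
    unfolding X_def H_def exp_poly_deriv_X_mult_exp_minus_1
    by (simp add: smult_add_right smult_diff_right algebra_simps)
  then have "H dvd deriv_tower exp_poly_deriv (X * H) N m -
      (- 1) ^ m * of_nat (fact m) * (of_nat D * X) ^ m * N"
    by (intro deriv_tower_dvd) simp_all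
  then have "H dvd (- 1) ^ m * (deriv_tower exp_poly_deriv (X * H) N m -
      (- 1) ^ m * of_nat (fact m) * (of_nat D * X) ^ m * N)"
    by (rule dvd_mult)
  also have "(- 1) ^ m * (deriv_tower exp_poly_deriv (X * H) N m -
      (- 1) ^ m * of_nat (fact m) * (of_nat D * X) ^ m * N) =
      ((- 1) ^ m * deriv_tower exp_poly_deriv (X * H) N m - T) + H * Q"
    unfolding T_def Q_def N_def shifted_bernoulli_numerator_def X_def[symmetric] H_def[symmetric]
    by (simp add: power_mult_distrib algebra_simps)
  finally show ?thesis
    unfolding N_def T_def by (simp add: dvd_add_left_iff)
qed

lemma Delta_entry_top_coeffs_eq_0:
  assumes D: "D \<ge> 1"
    and rel: "\<And>a. a \<ge> A \<Longrightarrow> (\<Sum>m<Suc M. \<Sum>u<D. c m u * Delta_entry D m (Suc u) a) = 0"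
    and "u < D"
  shows "c M u = 0"
proof -
  define X H where "X = ([:[:0, 1:]:] :: real poly poly)" and "H = (monom 1 D - 1 :: real poly poly)"
  define \<Psi> where "\<Psi> = deriv_tower exp_poly_deriv (X * H) (shifted_bernoulli_numerator D (c M)) M"
  obtain l where "(\<Sum>m<Suc M. of_nat (D ^ (M - m)) * (fps_deriv ^^ m) (shifted_bernoulli_fps D (c m))) =
      fps_of_poly l"
    using Delta_entry_relation_imp_poly[OF D rel] by blast
  then have "X * H dvd \<Psi>"
    unfolding \<Psi>_def X_def H_def
    by (rule dvd_deriv_tower_if_sum_eq_poly[OF exp_poly_fps_shifted_bernoulli_numerator])
  then have "H dvd (- 1) ^ M * \<Psi>"
    by (rule dvd_mult[OF dvd_mult_right])
  moreover have "H dvd (- 1) ^ M * \<Psi> - of_nat (fact M * D ^ Suc M) * X ^ Suc M * exp_sum_poly D (c M)"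
    using exp_minus_1_dvd_deriv_tower_numerator[of D M "c M"] unfolding \<Psi>_def X_def H_def .
  ultimately have "H dvd (- 1) ^ M * \<Psi> -
      ((- 1) ^ M * \<Psi> - of_nat (fact M * D ^ Suc M) * X ^ Suc M * exp_sum_poly D (c M))"
    by (rule dvd_diff)
  then have "H dvd of_nat (fact M * D ^ Suc M) * X ^ Suc M * exp_sum_poly D (c M)"
    by (simp only: diff_diff_eq2 diff_add_cancel add_diff_cancel_left')
  moreover have "fact M * D ^ Suc M \<noteq> 0"
    using D by simp
  ultimately show ?thesis
    using exp_sum_poly_coeff_eq_0_if_dvd[OF D] \<open>u < D\<close> unfolding X_def H_def by blast
qed

lemma Delta_entry_relation_coeffs_eq_0:
  assumes D: "D \<ge> 1"
  shows "(\<And>a. a \<ge> A \<Longrightarrow> (\<Sum>m<r. \<Sum>u<D. c m u * Delta_entry D m (Suc u) a) = 0) \<Longrightarrow>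
    m < r \<Longrightarrow> u < D \<Longrightarrow> c m u = 0"
proof (induction r arbitrary: m)
  case (Suc r)
  have top: "c r u' = 0" if "u' < D" for u'
    using Delta_entry_top_coeffs_eq_0[OF D Suc.prems(1) that] .
  have "(\<Sum>m<r. \<Sum>u<D. c m u * Delta_entry D m (Suc u) a) = 0" if "a \<ge> A" for a
    using Suc.prems(1)[OF that] top by simp
  with Suc.IH Suc.prems(2,3) top show ?case
    by (cases "m = r") auto
qed simp

lemma Delta_entry_columns_lin_indep:
  assumes D: "D \<ge> 1"
  shows "lin_indep_on_tails (r * D) (\<lambda>c. Delta_entry D (c div D) (Suc (c mod D)))"
  unfolding lin_indep_on_tails_def
proof (intro allI impI)
  fix A coef c
  assume rel: "\<forall>a\<ge>A. (\<Sum>c<r * D. coef c * Delta_entry D (c div D) (Suc (c mod D)) a) = 0"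
    and "c < r * D"
  have "(\<Sum>m<r. \<Sum>u<D. coef (m * D + u) * Delta_entry D m (Suc u) a) = 0" if "a \<ge> A" for a
  proof -
    have "(\<Sum>m<r. \<Sum>u<D. coef (m * D + u) * Delta_entry D m (Suc u) a) =
        (\<Sum>c<r * D. coef c * Delta_entry D (c div D) (Suc (c mod D)) a)"
      unfolding sum_lessThan_mult by (intro sum.cong refl) simp
    with rel that show ?thesis by simp
  qed
  moreover have "c div D < r" "c mod D < D"
    using \<open>c < r * D\<close> D by (simp_all add: less_mult_imp_div_less)
  ultimately have "coef (c div D * D + c mod D) = 0"
    by (rule Delta_entry_relation_coeffs_eq_0[OF D])
  then show "coef c = 0"
    by simp
qed

theorem theorem1p2:
  fixes r D :: nat
  assumes "r \<ge> 1"
    and "D = 1 \<or> prime D"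
  shows "\<exists>\<alpha> :: nat \<Rightarrow> nat.
           (\<forall>i j. i < j \<longrightarrow> j < r * D \<longrightarrow> \<alpha> i < \<alpha> j)
         \<and> \<alpha> 0 \<ge> 2
         \<and> Delta r D \<alpha> \<noteq> 0"
proof -
  have D: "D \<ge> 1"
    using assms(2) prime_ge_1_nat by auto
  obtain \<alpha> where inc: "\<forall>i j. i < j \<longrightarrow> j < r * D \<longrightarrow> \<alpha> i < \<alpha> j"
    and ge: "\<forall>i<r * D. 2 \<le> \<alpha> i"
    and det: "det (mat (r * D) (r * D)
      (\<lambda>(i, c). Delta_entry D (c div D) (Suc (c mod D)) (\<alpha> i))) \<noteq> 0"
    using lin_indep_on_tails_imp_det_ne_0[OF Delta_entry_columns_lin_indep[OF D]] by blast
  have "Delta r D \<alpha> = det (mat (r * D) (r * D)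
      (\<lambda>(i, c). Delta_entry D (c div D) (Suc (c mod D)) (\<alpha> i)))"
    unfolding Delta_def Delta_mat_def Delta_entry_def by (simp add: Let_def)
  moreover have "2 \<le> \<alpha> 0"
    using ge D assms(1) by simp
  ultimately show ?thesis
    using inc det by (intro exI[of _ \<alpha>]) simp
qed

end
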